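(* For all $s\in\mathbb{Z}$ and each $x\in V_{\alpha_s}$, $g_{\alpha_s}(x)=a_{\alpha_{s+1}}(b_{\alpha_s}(x))$.
   Context: Fix $d\ge1$, $\lambda>0$, scales $\alpha_s=\lambda 2^s$ ($s\in\mathbb{Z}$), and grids $G_{\alpha_s}\subset\mathbb{R}^d$ with $G_{\alpha_0}=\lambda\mathbb{Z}^d$ and $G_{\alpha_{s+1}}=2(G_{\alpha_s}-O_s)+O_s+\frac{\alpha_s}{2}\varepsilon_s$ for some $O_s\in G_{\alpha_s}$, $\varepsilon_s\in\{-1,1\}^d$. $\mathrm{Vor}_G(x)$ is the Voronoi cell of $x$ in the grid $G$ (closed cube of side $\alpha_s$ centered at $x$ for $G=G_{\alpha_s}$). The vertex map $g_{\alpha_s}:G_{\alpha_s}\to G_{\alpha_{s+1}}$ sends $x$ to the unique $y\in G_{\alpha_{s+1}}$ with $x\in \mathrm{Vor}_{G_{\alpha_{s+1}}}(y)$. Let $P\subset\mathbb{R}^d$ be finite. For $p\in P$, $a_{\alpha_s}(p)$ is the grid point of $G_{\alpha_s}$ whose Voronoi cell contains $p$ (assumed unique). The active vertices are $V_{\alpha_s}:=a_{\alpha_s}(P)$. For $v\in V_{\alpha_s}$, $b_{\alpha_s}(v)$ is the point of $P\cap \mathrm{Vor}_{G_{\alpha_s}}(v)$ closest to $v$, ties broken by a fixed total order on $P$. *)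

theory Defs
  imports "HOL-Analysis.Analysis"
begin

definition scale :: "real \<Rightarrow> int \<Rightarrow> real" where
  "scale lam s = lam * 2 powr (real_of_int s)"

definition voronoi :: "('a::metric_space) set \<Rightarrow> 'a \<Rightarrow> 'a set" where
  "voronoi G x = {y. \<forall>z\<in>G. dist y x \<le> dist y z}"

text \<open>The grid point of G whose Voronoi cell contains p (a_alpha(p); also used for the
  vertex map g_alpha, which sends x to the point of the next grid whose cell contains x).\<close>
definition grid_point :: "('a::metric_space) set \<Rightarrow> 'a \<Rightarrow> 'a" where
  "grid_point G p = (THE v. v \<in> G \<and> p \<in> voronoi G v)"

definition vertex_map :: "('a::metric_space) set \<Rightarrow> 'a \<Rightarrow> 'a" where
  "vertex_map G' x = (THE y. y \<in> G' \<and> x \<in> voronoi G' y)"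

definition rep_point :: "('a::metric_space) set \<Rightarrow> ('a \<times> 'a) set \<Rightarrow> 'a set \<Rightarrow> 'a \<Rightarrow> 'a" where
  "rep_point P R G v = (THE p. p \<in> P \<inter> voronoi G v \<and>
      (\<forall>q \<in> P \<inter> voronoi G v. dist p v < dist q v \<or> (dist p v = dist q v \<and> (p, q) \<in> R)))"

end

theory Submission
  imports Defs
begin

(* Each grid G_s is a translate of the cubic lattice of spacing a = alpha_s, so its Voronoi
   cells are the closed cubes of side a. Seen from a point x of G_s, every coordinate of a
   point of G_(s+1) is offset by an odd multiple of a/2 (this is the shift (a/2) eps_s), so some
   y in G_(s+1) has |x_i - y_i| = a/2 < alpha_(s+1)/2 for all i: x lies in the interior of the
   cell of y, hence g(x) = y. Any p in the cell of x has |p_i - x_i| <= a/2, hence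
   |p_i - y_i| <= a = alpha_(s+1)/2, so p lies in the cell of y and a_(s+1)(p) = y. This
   applies to p = b(x); the tie-breaking order only makes b(x) well defined. *)

definition cubic_lattice :: "real^'n \<Rightarrow> real \<Rightarrow> (real^'n) set" where
  "cubic_lattice c a = {y. \<forall>i. \<exists>k::int. y$i = c$i + a * of_int k}"

lemma cubic_lattice_diff:
  assumes "y \<in> cubic_lattice c a" "z \<in> cubic_lattice c a"
  obtains k :: int where "z$i - y$i = a * of_int k"
proof -
  obtain m n :: int where "y$i = c$i + a * of_int m" "z$i = c$i + a * of_int n"
    using assms unfolding cubic_lattice_def by blast
  then have "z$i - y$i = a * of_int (n - m)" by (simp add: algebra_simps)
  then show thesis by (rule that)
qed

lemma cubic_lattice_add_axis:
  assumes "y \<in> cubic_lattice c a"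
  shows "y + (a * of_int m) *\<^sub>R axis i 1 \<in> cubic_lattice c a"
  unfolding cubic_lattice_def
proof (intro CollectI allI)
  fix j
  obtain k :: int where "y$j = c$j + a * of_int k" using assms unfolding cubic_lattice_def by blast
  then have "(y + (a * of_int m) *\<^sub>R axis i 1)$j = c$j + a * of_int (if j = i then k + m else k)"
    by (simp add: axis_def algebra_simps)
  then show "\<exists>k::int. (y + (a * of_int m) *\<^sub>R axis i 1)$j = c$j + a * of_int k" ..
qed

lemma scaleR_image_cubic_lattice:
  assumes "r \<noteq> 0"
  shows "(\<lambda>y. r *\<^sub>R y + w) ` cubic_lattice c a = cubic_lattice (r *\<^sub>R c + w) (r * a)"
proof (intro equalityI subsetI)
  fix z assume "z \<in> (\<lambda>y. r *\<^sub>R y + w) ` cubic_lattice c a"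
  then obtain y where y: "y \<in> cubic_lattice c a" and z: "z = r *\<^sub>R y + w" by blast
  show "z \<in> cubic_lattice (r *\<^sub>R c + w) (r * a)"
    unfolding cubic_lattice_def
  proof (intro CollectI allI)
    fix i
    obtain k :: int where "y$i = c$i + a * of_int k" using y unfolding cubic_lattice_def by blast
    then show "\<exists>k::int. z$i = (r *\<^sub>R c + w)$i + r * a * of_int k"
      using z by (auto simp: algebra_simps)
  qed
next
  fix z assume z: "z \<in> cubic_lattice (r *\<^sub>R c + w) (r * a)"
  have "(1/r) *\<^sub>R (z - w) \<in> cubic_lattice c a"
    using z assms unfolding cubic_lattice_def by (auto simp: field_simps)
  moreover have "z = r *\<^sub>R ((1/r) *\<^sub>R (z - w)) + w" using assms by simp
  ultimately show "z \<in> (\<lambda>y. r *\<^sub>R y + w) ` cubic_lattice c a" by blast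
qed

lemma scale_succ: "scale lam (t + 1) = 2 * scale lam t"
  by (simp add: scale_def powr_add)

lemma grids_cubic_lattices:
  assumes "G 0 = cubic_lattice 0 lam" "\<And>t. G (t + 1) = (\<lambda>y. 2 *\<^sub>R y + w t) ` G t"
  shows "\<exists>c. G t = cubic_lattice c (scale lam t)"
proof (induction t rule: int_induct[where k = 0])
  case base
  then show ?case using assms(1) by (auto simp: scale_def)
next
  case (step1 t)
  then obtain c where "G t = cubic_lattice c (scale lam t)" by blast
  then have "G (t + 1) = cubic_lattice (2 *\<^sub>R c + w t) (scale lam (t + 1))"
    using assms(2)[of t] by (simp add: scaleR_image_cubic_lattice scale_succ)
  then show ?case ..
next
  case (step2 t)
  then obtain c where c: "G t = cubic_lattice c (scale lam t)" by blast
  let ?f = "\<lambda>y. 2 *\<^sub>R y + w (t - 1)"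
  have "?f ` G (t - 1) = ?f ` cubic_lattice ((1/2) *\<^sub>R (c - w (t - 1))) (scale lam (t - 1))"
    using assms(2)[of "t - 1"] c scale_succ[of lam "t - 1"]
    by (simp add: scaleR_image_cubic_lattice)
  moreover have "inj ?f" by (rule injI) simp
  ultimately show ?case by (auto simp: inj_image_eq_iff)
qed

lemma power2_norm_diff_scaleR_axis:
  fixes u :: "real^'n"
  shows "(norm (u - t *\<^sub>R axis i 1))\<^sup>2 = (norm u)\<^sup>2 - 2 * t * u$i + t\<^sup>2"
  unfolding power2_norm_eq_inner
  by (simp add: inner_axis inner_axis' inner_commute power2_eq_square algebra_simps)

lemma voronoi_cubic_lattice:
  assumes "a > 0" "y \<in> cubic_lattice c a"
  shows "voronoi (cubic_lattice c a) y = {p. \<forall>i. \<bar>p$i - y$i\<bar> \<le> a/2}"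
proof (intro equalityI subsetI CollectI allI)
  fix p i assume p: "p \<in> voronoi (cubic_lattice c a) y"
  have "(norm (p - y))\<^sup>2 \<le> (norm (p - y - (a * of_int m) *\<^sub>R axis i 1))\<^sup>2" for m :: int
    using p cubic_lattice_add_axis[OF assms(2), of m i] unfolding voronoi_def dist_norm
    by (auto simp: diff_diff_eq)
  from this[of 1] this[of "-1"]
  have "a * (2 * (p$i - y$i)) \<le> a * a" "a * (2 * (y$i - p$i)) \<le> a * a"
    unfolding power2_norm_diff_scaleR_axis by (simp_all add: power2_eq_square algebra_simps)
  then have "2 * (p$i - y$i) \<le> a" "2 * (y$i - p$i) \<le> a"
    using assms(1) by (simp_all add: mult_le_cancel_left_pos)
  then show "\<bar>p$i - y$i\<bar> \<le> a/2" by (auto simp: abs_if)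
next
  fix p assume p: "p \<in> {p. \<forall>i. \<bar>p$i - y$i\<bar> \<le> a/2}"
  have "dist p y \<le> dist p z" if z: "z \<in> cubic_lattice c a" for z
    unfolding dist_norm
  proof (rule norm_le_componentwise_cart)
    fix i
    obtain k :: int where k: "z$i - y$i = a * of_int k" using cubic_lattice_diff[OF assms(2) z] .
    have "k = 0 \<or> 1 \<le> \<bar>of_int k :: real\<bar>" by linarith
    then have "z$i = y$i \<or> a \<le> \<bar>z$i - y$i\<bar>" using k assms(1) by (auto simp: abs_mult)
    moreover have "\<bar>p$i - y$i\<bar> \<le> a/2" using p by simp
    ultimately show "norm ((p - y)$i) \<le> norm ((p - z)$i)"
      using assms(1) by (auto simp: abs_if split: if_splits)
  qed
  then show "p \<in> voronoi (cubic_lattice c a) y" unfolding voronoi_def by blast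
qed

lemma voronoi_cubic_lattice_unique:
  assumes "a > 0" "y \<in> cubic_lattice c a" "z \<in> cubic_lattice c a"
    and "p \<in> voronoi (cubic_lattice c a) z" "\<And>i. \<bar>p$i - y$i\<bar> < a/2"
  shows "z = y"
  unfolding vec_eq_iff
proof
  fix i
  obtain k :: int where k: "z$i - y$i = a * of_int k" using cubic_lattice_diff[OF assms(2,3)] .
  have "\<bar>p$i - z$i\<bar> \<le> a/2" using assms(1,3,4) by (simp add: voronoi_cubic_lattice)
  then have "\<bar>z$i - y$i\<bar> < a"
    using abs_triangle_ineq[of "z$i - p$i" "p$i - y$i"] abs_minus_commute[of "z$i" "p$i"] assms(5)[of i]
    by linarith
  moreover have "\<bar>z$i - y$i\<bar> = a * \<bar>of_int k\<bar>" using k assms(1) by (simp add: abs_mult)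
  ultimately have "a * \<bar>of_int k\<bar> < a * 1" by simp
  then have "k = 0" using assms(1) by (simp add: mult_less_cancel_left_pos)
  then show "z$i = y$i" using k by simp
qed

lemma voronoi_cubic_lattice_subset_coarse:
  assumes "a > 0" "x \<in> cubic_lattice c a" "y \<in> cubic_lattice c' (2 * a)"
    and "\<And>i. \<bar>x$i - y$i\<bar> \<le> a/2"
  shows "voronoi (cubic_lattice c a) x \<subseteq> voronoi (cubic_lattice c' (2 * a)) y"
proof
  fix p assume p: "p \<in> voronoi (cubic_lattice c a) x"
  have "\<bar>p$i - y$i\<bar> \<le> 2 * a / 2" for i
  proof -
    have "\<bar>p$i - x$i\<bar> \<le> a/2" using p assms(1,2) by (simp add: voronoi_cubic_lattice)
    then show ?thesis using abs_triangle_ineq[of "p$i - x$i" "x$i - y$i"] assms(4)[of i] by simp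
  qed
  then show "p \<in> voronoi (cubic_lattice c' (2 * a)) y"
    using assms(1,3) by (simp add: voronoi_cubic_lattice)
qed

lemma exists_int_half_offset:
  fixes k :: int and e :: real
  assumes "e \<in> {-1, 1}"
  shows "\<exists>j::int. \<bar>of_int (2 * j - k) + e / 2\<bar> = 1 / 2"
proof (cases "e = 1")
  case True
  have "\<exists>j::int. 2 * j - k = 0 \<or> 2 * j - k = -1" by presburger
  then obtain j :: int where "2 * j - k = 0 \<or> 2 * j - k = -1" by blast
  then have "\<bar>of_int (2 * j - k) + e / 2\<bar> = 1 / 2" using True by (elim disjE) simp_all
  then show ?thesis ..
next
  case False
  then have "e = -1" using assms by simp
  have "\<exists>j::int. 2 * j - k = 0 \<or> 2 * j - k = 1" by presburger
  then obtain j :: int where "2 * j - k = 0 \<or> 2 * j - k = 1" by blast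
  then have "\<bar>of_int (2 * j - k) + e / 2\<bar> = 1 / 2" using \<open>e = -1\<close> by (elim disjE) simp_all
  then show ?thesis ..
qed

lemma exists_coarse_point_near:
  assumes "a > 0" "x \<in> cubic_lattice c a" "b \<in> cubic_lattice c a" "\<And>i. e$i \<in> {-1, 1}"
  shows "\<exists>y \<in> (\<lambda>u. 2 *\<^sub>R (u - b) + b + (a/2) *\<^sub>R e) ` cubic_lattice c a.
           \<forall>i. \<bar>x$i - y$i\<bar> = a/2"
proof -
  have "\<forall>i. \<exists>k::int. b$i - x$i = a * of_int k"
    using cubic_lattice_diff[OF assms(2,3)] by metis
  then obtain k :: "'a \<Rightarrow> int" where k: "\<And>i. b$i - x$i = a * of_int (k i)" by metis
  have "\<forall>i. \<exists>j::int. \<bar>of_int (2 * j - k i) + e$i / 2\<bar> = 1 / 2"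
    using exists_int_half_offset assms(4) by blast
  then obtain j :: "'a \<Rightarrow> int" where j: "\<And>i. \<bar>of_int (2 * j i - k i) + e$i / 2\<bar> = 1 / 2"
    by metis
  define u where "u = x + (\<chi> i. a * of_int (j i))"
  have "u \<in> cubic_lattice c a"
    unfolding cubic_lattice_def
  proof (intro CollectI allI)
    fix i
    obtain m :: int where "x$i = c$i + a * of_int m" using assms(2) unfolding cubic_lattice_def by blast
    then have "u$i = c$i + a * of_int (m + j i)" by (simp add: u_def algebra_simps)
    then show "\<exists>k::int. u$i = c$i + a * of_int k" ..
  qed
  moreover have "\<bar>x$i - (2 *\<^sub>R (u - b) + b + (a/2) *\<^sub>R e)$i\<bar> = a/2" for i
  proof -
    have "x$i - (2 *\<^sub>R (u - b) + b + (a/2) *\<^sub>R e)$i = - (a * (of_int (2 * j i - k i) + e$i / 2))"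
      using k[of i] by (simp add: u_def algebra_simps)
    then show ?thesis using j[of i] assms(1) by (simp add: abs_mult)
  qed
  ultimately show ?thesis by blast
qed

lemma grid_point_eqI:
  assumes "y \<in> G" "p \<in> voronoi G y" "\<And>z. z \<in> G \<Longrightarrow> p \<in> voronoi G z \<Longrightarrow> z = y"
  shows "grid_point G p = y"
  unfolding grid_point_def
proof (rule the_equality)
  show "y \<in> G \<and> p \<in> voronoi G y" using assms(1,2) ..
qed (use assms(3) in blast)

lemma grid_point_in_cell:
  assumes "\<exists>!v. v \<in> G \<and> p \<in> voronoi G v"
  shows "grid_point G p \<in> G" "p \<in> voronoi G (grid_point G p)"
  using theI'[OF assms] unfolding grid_point_def by auto

lemma vertex_map_eq_grid_point: "vertex_map = grid_point"
  by (intro ext) (simp add: vertex_map_def grid_point_def)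

lemma grid_point_cubic_lattice:
  assumes "a > 0" "y \<in> cubic_lattice c a" "\<And>i. \<bar>p$i - y$i\<bar> < a/2"
  shows "grid_point (cubic_lattice c a) p = y"
proof (rule grid_point_eqI[OF assms(2)])
  show "p \<in> voronoi (cubic_lattice c a) y"
    using assms by (simp add: voronoi_cubic_lattice less_imp_le)
  show "z = y" if "z \<in> cubic_lattice c a" "p \<in> voronoi (cubic_lattice c a) z" for z
    using voronoi_cubic_lattice_unique[OF assms(1,2) that assms(3)] .
qed

lemma linear_order_on_finite_has_least:
  assumes "linear_order_on A R" "finite S" "S \<noteq> {}" "S \<subseteq> A"
  shows "\<exists>m\<in>S. \<forall>q\<in>S. (m, q) \<in> R"
  using assms(2-4)
proof (induction S rule: finite_ne_induct)
  case (singleton x)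
  then show ?case using assms(1) by (auto simp: order_on_defs refl_on_def)
next
  case (insert x F)
  then obtain m where m: "m \<in> F" "\<forall>q\<in>F. (m, q) \<in> R" by auto
  have "(x, x) \<in> R" using insert.prems assms(1) by (auto simp: order_on_defs refl_on_def)
  moreover have "(x, m) \<in> R \<or> (m, x) \<in> R"
    using insert m(1) assms(1) by (auto simp: order_on_defs total_on_def)
  ultimately show ?case
    using m assms(1) unfolding order_on_defs trans_def by blast
qed

lemma rep_point_in_cell:
  assumes "finite P" "linear_order_on P R" "P \<inter> voronoi G v \<noteq> {}"
  shows "rep_point P R G v \<in> P \<inter> voronoi G v"
proof -
  let ?S = "P \<inter> voronoi G v"
  let ?closest = "\<lambda>p. p \<in> ?S \<and>
    (\<forall>q \<in> ?S. dist p v < dist q v \<or> (dist p v = dist q v \<and> (p, q) \<in> R))"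
  define D where "D = Min ((\<lambda>q. dist q v) ` ?S)"
  have D: "D \<in> (\<lambda>q. dist q v) ` ?S" "\<And>q. q \<in> ?S \<Longrightarrow> D \<le> dist q v"
    using assms(1,3) unfolding D_def by auto
  obtain m where m: "m \<in> ?S" "dist m v = D"
    and m_least: "\<And>q. q \<in> ?S \<Longrightarrow> dist q v = D \<Longrightarrow> (m, q) \<in> R"
    using linear_order_on_finite_has_least[OF assms(2), of "{q \<in> ?S. dist q v = D}"] D(1) assms(1)
    by auto
  have "?closest m"
  proof (intro conjI ballI)
    fix q assume q: "q \<in> ?S"
    then show "dist m v < dist q v \<or> (dist m v = dist q v \<and> (m, q) \<in> R)"
      using m(2) m_least[OF q] D(2)[OF q] by auto
  qed (rule m(1))
  moreover have "p = p'" if "?closest p" "?closest p'" for p p'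
  proof -
    have "dist p v < dist p' v \<or> (dist p v = dist p' v \<and> (p, p') \<in> R)"
      and "dist p' v < dist p v \<or> (dist p' v = dist p v \<and> (p', p) \<in> R)"
      using that by blast+
    then have "(p, p') \<in> R" "(p', p) \<in> R" by auto
    then show ?thesis using assms(2) unfolding order_on_defs antisym_def by blast
  qed
  ultimately have "\<exists>!p. ?closest p" by blast
  then have "?closest (rep_point P R G v)"
    unfolding rep_point_def by (rule theI')
  then show ?thesis by blast
qed

theorem lemma5:
  fixes lam :: real
    and G :: "int \<Rightarrow> (real ^ 'd) set"
    and Oc :: "int \<Rightarrow> real ^ 'd"
    and eps :: "int \<Rightarrow> real ^ 'd"
    and P :: "(real ^ 'd) set"
    and R :: "((real ^ 'd) \<times> (real ^ 'd)) set"
    and s :: int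
    and x :: "real ^ 'd"
  assumes lam_pos: "lam > 0"
    and G0: "G 0 = {y. \<forall>i. \<exists>k::int. y $ i = lam * real_of_int k}"
    and O_in: "\<And>t. Oc t \<in> G t"
    and eps_sign: "\<And>t i. eps t $ i \<in> {-1, 1}"
    and G_succ: "\<And>t. G (t + 1) =
        (\<lambda>y. 2 *\<^sub>R (y - Oc t) + Oc t + (scale lam t / 2) *\<^sub>R eps t) ` G t"
    and P_fin: "finite P"
    and R_ord: "linear_order_on P R"
    and a_unique: "\<And>t p. p \<in> P \<Longrightarrow> \<exists>!v. v \<in> G t \<and> p \<in> voronoi (G t) v"
    and x_active: "x \<in> grid_point (G s) ` P"
  shows "vertex_map (G (s + 1)) x = grid_point (G (s + 1)) (rep_point P R (G s) x)"
proof -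
  define a where "a = scale lam s"
  have "a > 0" using lam_pos by (simp add: a_def scale_def)
  have lattice: "\<exists>c. G t = cubic_lattice c (scale lam t)" for t
  proof (rule grids_cubic_lattices)
    show "G 0 = cubic_lattice 0 lam" using G0 by (simp add: cubic_lattice_def)
    show "G (t + 1) = (\<lambda>y. 2 *\<^sub>R y + ((scale lam t / 2) *\<^sub>R eps t - Oc t)) ` G t" for t
      unfolding G_succ by (rule image_cong) (simp_all add: vec_eq_iff algebra_simps)
  qed
  obtain c where Gs: "G s = cubic_lattice c a" using lattice[of s] unfolding a_def by blast
  obtain c' where Gs': "G (s + 1) = cubic_lattice c' (2 * a)"
    using lattice[of "s + 1"] unfolding a_def scale_succ by blast
  obtain p where p: "p \<in> P" "x = grid_point (G s) p" using x_active by blast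
  note x = grid_point_in_cell[OF a_unique[OF p(1), of s], folded p(2)]
  have x_lattice: "x \<in> cubic_lattice c a" and "Oc s \<in> cubic_lattice c a"
    using x(1) O_in[of s] Gs by auto
  then have "\<exists>y \<in> G (s + 1). \<forall>i. \<bar>x$i - y$i\<bar> = a/2"
    unfolding G_succ Gs a_def[symmetric]
    by (rule exists_coarse_point_near[OF \<open>a > 0\<close> _ _ eps_sign])
  then obtain y where y: "y \<in> cubic_lattice c' (2 * a)" and near: "\<And>i. \<bar>x$i - y$i\<bar> = a/2"
    unfolding Gs' by blast
  have "\<bar>x$i - y$i\<bar> < 2 * a / 2" for i using near[of i] \<open>a > 0\<close> by simp
  with \<open>a > 0\<close> y have "vertex_map (G (s + 1)) x = y"
    unfolding vertex_map_eq_grid_point Gs' by (intro grid_point_cubic_lattice) simp_all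
  moreover have "grid_point (G (s + 1)) (rep_point P R (G s) x) = y"
  proof -
    let ?b = "rep_point P R (G s) x"
    have b: "?b \<in> P" "?b \<in> voronoi (G s) x"
      using rep_point_in_cell[OF P_fin R_ord] p(1) x(2) by blast+
    have "voronoi (G s) x \<subseteq> voronoi (G (s + 1)) y"
      unfolding Gs Gs' using near
      by (intro voronoi_cubic_lattice_subset_coarse[OF \<open>a > 0\<close> x_lattice y]) simp
    then have "?b \<in> voronoi (G (s + 1)) y" using b(2) by (rule subsetD)
    then show ?thesis
      using a_unique[OF b(1), of "s + 1"] y unfolding Gs' by (intro grid_point_eqI) auto
  qed
  ultimately show ?thesis by simp
qed

end
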